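(* Let $E_\alpha(z)=\sum_{k=0}^\infty \frac{z^k}{\Gamma(\alpha k+1)}$ denote the Mittag-Leffler function, $\alpha>0$. For $0<\alpha<1$, \[ E_\alpha((x+y)^\alpha)\le E_\alpha(x^\alpha)E_\alpha(y^\alpha),\qquad x,y\ge 0, \] and for $\alpha>1$, \[ E_\alpha((x+y)^\alpha)\ge E_\alpha(x^\alpha)E_\alpha(y^\alpha),\qquad x,y\ge 0. \] Both inequalities are strict whenever $x>0$ and $y>0$. *)

theory Defs
  imports "HOL-Analysis.Analysis"
begin

definition mittag_leffler :: "real \<Rightarrow> real \<Rightarrow> real" where
  "mittag_leffler \<alpha> z = (\<Sum>k. z ^ k / Gamma (\<alpha> * real k + 1))"

end

theory Submission
  imports Defs
begin

text \<open>
Write \<open>f \<beta> u = u powr \<beta> / \<Gamma>(\<beta> + 1)\<close>. Then \<open>E\<^sub>\<alpha>(u powr \<alpha>) = (\<Sum>n. f (\<alpha> n) u)\<close>, so by the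
Cauchy product it suffices to compare \<open>f (\<alpha> n) (x + t)\<close> with
\<open>\<Sum>j\<le>n. f (\<alpha> j) x * f (\<alpha> (n - j)) t\<close> term by term. This goes by induction on \<open>n\<close>
through the Riemann-Liouville identity
\<open>\<Gamma>(\<alpha>) f (\<alpha> + \<beta>) T = \<integral>\<^sub>0\<^sup>T (T - u) powr (\<alpha> - 1) f \<beta> u du\<close>: split the integral at \<open>x\<close>;
on \<open>[0, x]\<close> the kernel \<open>(T - u) powr (\<alpha> - 1)\<close> is decreasing in \<open>T\<close> for \<open>\<alpha> < 1\<close> and
increasing for \<open>\<alpha> > 1\<close>, which compares that piece with \<open>\<Gamma>(\<alpha>) f (\<alpha> + \<beta>) x\<close>, while on
\<open>[x, T]\<close> the induction hypothesis applies. A sign \<open>\<sigma> = \<plusminus>1\<close> treats both cases at once.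
The inequality is strict because the term \<open>n = 1\<close> is the strict sub- or superadditivity
of \<open>u powr \<alpha>\<close>.
\<close>

lemma powr_add_less:
  fixes \<alpha> x y :: real
  assumes "0 < \<alpha>" "\<alpha> < 1" "x > 0" "y > 0"
  shows "(x + y) powr \<alpha> < x powr \<alpha> + y powr \<alpha>"
proof -
  have "(x + y) powr \<alpha> = x * (x + y) powr (\<alpha> - 1) + y * (x + y) powr (\<alpha> - 1)"
    using assms by (simp add: powr_mult_base distrib_right[symmetric])
  also have "\<dots> < x * x powr (\<alpha> - 1) + y * y powr (\<alpha> - 1)"
    using assms by (intro add_strict_mono mult_strict_left_mono powr_less_mono2_neg) auto
  also have "\<dots> = x powr \<alpha> + y powr \<alpha>"
    using assms by (simp add: powr_mult_base)
  finally show ?thesis .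
qed

lemma powr_add_greater:
  fixes \<alpha> x y :: real
  assumes "\<alpha> > 1" "x > 0" "y > 0"
  shows "(x + y) powr \<alpha> > x powr \<alpha> + y powr \<alpha>"
proof -
  have "x powr \<alpha> + y powr \<alpha> = x * x powr (\<alpha> - 1) + y * y powr (\<alpha> - 1)"
    using assms by (simp add: powr_mult_base)
  also have "\<dots> < x * (x + y) powr (\<alpha> - 1) + y * (x + y) powr (\<alpha> - 1)"
    using assms by (intro add_strict_mono mult_strict_left_mono powr_less_mono2) auto
  also have "\<dots> = (x + y) powr \<alpha>"
    using assms by (simp add: powr_mult_base distrib_right[symmetric])
  finally show ?thesis .
qed

lemma powr_mult_Gamma_le:
  fixes s a :: real
  assumes s: "s > 1" and a: "a > 0"
  shows "(s - 1) powr a * Gamma s \<le> Gamma (s + a)"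
proof -
  \<comment> \<open>By log-convexity, the slope \<open>ln (s - 1)\<close> of \<open>ln \<circ> Gamma\<close> on \<open>[s - 1, s]\<close> is at most its slope on \<open>[s, s + a]\<close>.\<close>
  define f where "f = ln \<circ> (Gamma :: real \<Rightarrow> real)"
  have mem: "s - 1 \<in> {0<..}" "s + a \<in> {0<..}"
    using s a by auto
  have "(f (s - 1) - f s) / ((s - 1) - s) \<le> (f s - f (s + a)) / (s - (s + a))"
    using convex_on_slope_le[OF log_convex_Gamma_real[folded f_def] mem, of s] a by linarith
  then have "f s - f (s - 1) \<le> - ((f s - f (s + a)) / a)"
    by simp
  then have slope: "a * (f s - f (s - 1)) \<le> f (s + a) - f s"
    using mult_left_mono[of _ _ a] a by fastforce
  have pos: "Gamma (s - 1) > 0" "Gamma s > 0" "Gamma (s + a) > 0"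
    using s a by (auto intro!: Gamma_real_pos)
  have "Gamma s = (s - 1) * Gamma (s - 1)"
    using Gamma_plus1[of "s - 1"] s nonpos_Ints_nonpos[of "s - 1"] by fastforce
  then have "ln (Gamma s) = ln (s - 1) + ln (Gamma (s - 1))"
    using pos s by (simp add: ln_mult_pos)
  then have "f s - f (s - 1) = ln (s - 1)"
    by (simp add: f_def)
  with slope have "a * ln (s - 1) + ln (Gamma s) \<le> ln (Gamma (s + a))"
    by (simp add: f_def)
  then have "exp (a * ln (s - 1) + ln (Gamma s)) \<le> Gamma (s + a)"
    using pos by (simp add: ln_ge_iff)
  then have "exp (a * ln (s - 1)) * Gamma s \<le> Gamma (s + a)"
    using pos by (simp add: exp_add)
  with s show ?thesis
    by (simp add: powr_def mult.commute)
qed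

lemma sums_less:
  fixes f g :: "nat \<Rightarrow> real"
  assumes "\<And>n. f n \<le> g n" and "f m < g m" and "f sums s" and "g sums t"
  shows "s < t"
proof -
  have "(\<lambda>n. g n - f n) sums (t - s)"
    using assms by (intro sums_diff)
  moreover have "0 < (\<Sum>n. g n - f n)"
    using assms by (intro suminf_pos2[of _ m] sums_summable) (auto intro: sums_diff)
  ultimately show ?thesis
    by (simp add: sums_iff)
qed

definition frac_monomial :: "real \<Rightarrow> real \<Rightarrow> real" where
  "frac_monomial \<beta> u = u powr \<beta> / Gamma (\<beta> + 1)"

lemma frac_monomial_nonneg: "\<beta> \<ge> 0 \<Longrightarrow> frac_monomial \<beta> u \<ge> 0"
  unfolding frac_monomial_def by (intro divide_nonneg_pos powr_ge_zero Gamma_real_pos) auto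

lemma frac_monomial_0 [simp]: "u > 0 \<Longrightarrow> frac_monomial 0 u = 1"
  by (simp add: frac_monomial_def)

lemma has_integral_frac_monomial:
  fixes \<alpha> \<beta> T :: real
  assumes a: "\<alpha> > 0" and b: "\<beta> \<ge> 0" and T: "T > 0"
  shows "((\<lambda>u. (T - u) powr (\<alpha> - 1) * frac_monomial \<beta> u)
           has_integral Gamma \<alpha> * frac_monomial (\<alpha> + \<beta>) T) {0..T}"
proof -
  define c where "c = T powr (\<alpha> - 1 + \<beta>) / Gamma (\<beta> + 1)"
  have "((\<lambda>s. s powr \<beta> * (1 - s) powr (\<alpha> - 1)) has_integral Beta (\<beta> + 1) \<alpha>) {0..1}"
    using has_integral_Beta_real[of "\<beta> + 1" \<alpha>] a b by simp
  then have "((\<lambda>s. c * (s powr \<beta> * (1 - s) powr (\<alpha> - 1))) has_integral c * Beta (\<beta> + 1) \<alpha>) {0..1}"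
    by (rule has_integral_mult_right)
  moreover have "c * (s powr \<beta> * (1 - s) powr (\<alpha> - 1))
      = (T - T * s) powr (\<alpha> - 1) * frac_monomial \<beta> (T * s)" if "s \<in> {0..1}" for s
  proof -
    have "(T - T * s) powr (\<alpha> - 1) = T powr (\<alpha> - 1) * (1 - s) powr (\<alpha> - 1)"
      using that T by (subst powr_mult[symmetric]) (auto simp: algebra_simps)
    moreover have "(T * s) powr \<beta> = T powr \<beta> * s powr \<beta>"
      using that T by (subst powr_mult) auto
    ultimately show ?thesis unfolding c_def frac_monomial_def by (simp add: powr_add)
  qed
  ultimately have unit: "((\<lambda>s. (T - T * s) powr (\<alpha> - 1) * frac_monomial \<beta> (T * s))
                           has_integral c * Beta (\<beta> + 1) \<alpha>) {0..1}"
    by (rule has_integral_eq[rotated])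
  have "(\<lambda>x. (1 / (1 / T)) *\<^sub>R x + - ((1 / (1 / T)) *\<^sub>R 0)) ` cbox 0 1 = {0..T}"
    using T by (simp add: cbox_interval image_mult_atLeastAtMost)
  then have scaled: "((\<lambda>u. (T - u) powr (\<alpha> - 1) * frac_monomial \<beta> u)
                       has_integral T * (c * Beta (\<beta> + 1) \<alpha>)) {0..T}"
    using has_integral_affinity[OF unit[folded cbox_interval], of "1/T" 0] T by simp
  have "Gamma (\<beta> + 1) > 0" "Gamma (\<beta> + 1 + \<alpha>) > 0"
    using a b by (auto intro!: Gamma_real_pos)
  moreover have "T * T powr (\<alpha> - 1 + \<beta>) = T powr (\<alpha> + \<beta>)"
    using T by (simp add: powr_add[symmetric] powr_mult_base)
  ultimately have "T * (c * Beta (\<beta> + 1) \<alpha>) = Gamma \<alpha> * frac_monomial (\<alpha> + \<beta>) T"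
    unfolding c_def frac_monomial_def Beta_def by (simp add: field_simps)
  with scaled show ?thesis by simp
qed

lemma frac_monomial_split_integral:
  fixes \<alpha> \<beta> x t :: real
  assumes a: "\<alpha> > 0" and b: "\<beta> \<ge> 0" and x: "x > 0" and t: "t > 0"
  obtains I J :: real where
    "((\<lambda>u. (x + t - u) powr (\<alpha> - 1) * frac_monomial \<beta> u) has_integral I) {0..x}"
    "((\<lambda>v. (t - v) powr (\<alpha> - 1) * frac_monomial \<beta> (x + v)) has_integral J) {0..t}"
    "I + J = Gamma \<alpha> * frac_monomial (\<alpha> + \<beta>) (x + t)"
proof -
  define k where "k u = (x + t - u) powr (\<alpha> - 1) * frac_monomial \<beta> u" for u
  have hk: "(k has_integral Gamma \<alpha> * frac_monomial (\<alpha> + \<beta>) (x + t)) {0..x + t}"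
    unfolding k_def by (rule has_integral_frac_monomial) (use a b x t in auto)
  have head: "(k has_integral integral {0..x} k) {0..x}"
    using x t by (intro integrable_integral integrable_subinterval_real[OF has_integral_integrable[OF hk]]) auto
  have "(k has_integral integral {x..x + t} k) (cbox x (x + t))"
    using x t unfolding cbox_interval
    by (intro integrable_integral integrable_subinterval_real[OF has_integral_integrable[OF hk]]) auto
  then have "((\<lambda>v. k (v + x)) has_integral integral {x..x + t} k) {0..t}"
    using has_integral_affinity[of k _ x "x + t" 1 x] by (simp add: cbox_interval)
  moreover have "k (v + x) = (t - v) powr (\<alpha> - 1) * frac_monomial \<beta> (x + v)" for v
    by (simp add: k_def add.commute)
  ultimately have tail: "((\<lambda>v. (t - v) powr (\<alpha> - 1) * frac_monomial \<beta> (x + v))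
                           has_integral integral {x..x + t} k) {0..t}"
    by simp
  have "integral {0..x} k + integral {x..x + t} k = Gamma \<alpha> * frac_monomial (\<alpha> + \<beta>) (x + t)"
    using Henstock_Kurzweil_Integration.integral_combine[of 0 x "x + t" k] hk x t
    by (simp add: integral_unique has_integral_integrable)
  with head tail show ?thesis
    unfolding k_def by (rule that)
qed

lemma frac_monomial_head_integral_le:
  fixes \<alpha> \<beta> \<sigma> x t I :: real
  assumes a: "\<alpha> > 0" and b: "\<beta> \<ge> 0" and x: "x > 0" and t: "t > 0"
    and kernel_mono: "\<And>s s'. 0 < s \<Longrightarrow> s < s' \<Longrightarrow> \<sigma> * s' powr (\<alpha> - 1) \<le> \<sigma> * s powr (\<alpha> - 1)"
    and I: "((\<lambda>u. (x + t - u) powr (\<alpha> - 1) * frac_monomial \<beta> u) has_integral I) {0..x}"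
  shows "\<sigma> * I \<le> \<sigma> * (Gamma \<alpha> * frac_monomial (\<alpha> + \<beta>) x)"
proof (rule has_integral_le)
  show "((\<lambda>u. \<sigma> * ((x + t - u) powr (\<alpha> - 1) * frac_monomial \<beta> u)) has_integral \<sigma> * I) {0<..<x}"
    using has_integral_mult_right[OF I] has_integral_Icc_iff_Ioo by blast
  show "((\<lambda>u. \<sigma> * ((x - u) powr (\<alpha> - 1) * frac_monomial \<beta> u))
          has_integral \<sigma> * (Gamma \<alpha> * frac_monomial (\<alpha> + \<beta>) x)) {0<..<x}"
    using has_integral_mult_right[OF has_integral_frac_monomial[OF a b x]] has_integral_Icc_iff_Ioo
    by blast
next
  fix u assume u: "u \<in> {0<..<x}"
  have "\<sigma> * (x + t - u) powr (\<alpha> - 1) * frac_monomial \<beta> u \<le> \<sigma> * (x - u) powr (\<alpha> - 1) * frac_monomial \<beta> u"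
    by (intro mult_right_mono kernel_mono frac_monomial_nonneg b) (use u t in auto)
  then show "\<sigma> * ((x + t - u) powr (\<alpha> - 1) * frac_monomial \<beta> u) \<le> \<sigma> * ((x - u) powr (\<alpha> - 1) * frac_monomial \<beta> u)"
    by (simp add: mult.assoc)
qed

lemma frac_monomial_tail_integral_le:
  fixes \<alpha> \<sigma> t J :: real and g :: "real \<Rightarrow> real" and c :: "nat \<Rightarrow> real"
  assumes a: "\<alpha> > 0" and t: "t > 0"
    and J: "((\<lambda>v. (t - v) powr (\<alpha> - 1) * g v) has_integral J) {0..t}"
    and le: "\<And>v. 0 < v \<Longrightarrow> v < t \<Longrightarrow> \<sigma> * g v \<le> \<sigma> * (\<Sum>j\<le>n. c j * frac_monomial (\<alpha> * real (n - j)) v)"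
  shows "\<sigma> * J \<le> \<sigma> * (\<Sum>j\<le>n. c j * (Gamma \<alpha> * frac_monomial (\<alpha> * real (Suc n - j)) t))"
proof (rule has_integral_le)
  show "((\<lambda>v. \<sigma> * ((t - v) powr (\<alpha> - 1) * g v)) has_integral \<sigma> * J) {0<..<t}"
    using has_integral_mult_right[OF J] has_integral_Icc_iff_Ioo by blast
  have "((\<lambda>v. \<Sum>j\<le>n. c j * ((t - v) powr (\<alpha> - 1) * frac_monomial (\<alpha> * real (n - j)) v))
          has_integral (\<Sum>j\<le>n. c j * (Gamma \<alpha> * frac_monomial (\<alpha> * real (Suc n - j)) t))) {0..t}"
    by (intro has_integral_sum has_integral_mult_right has_integral_frac_monomial[THEN has_integral_eq_rhs])
       (use a t in \<open>auto simp: Suc_diff_le algebra_simps\<close>)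
  then show "((\<lambda>v. \<sigma> * (\<Sum>j\<le>n. c j * ((t - v) powr (\<alpha> - 1) * frac_monomial (\<alpha> * real (n - j)) v)))
          has_integral \<sigma> * (\<Sum>j\<le>n. c j * (Gamma \<alpha> * frac_monomial (\<alpha> * real (Suc n - j)) t))) {0<..<t}"
    using has_integral_mult_right has_integral_Icc_iff_Ioo by blast
next
  fix v assume v: "v \<in> {0<..<t}"
  have "(t - v) powr (\<alpha> - 1) * (\<sigma> * g v)
          \<le> (t - v) powr (\<alpha> - 1) * (\<sigma> * (\<Sum>j\<le>n. c j * frac_monomial (\<alpha> * real (n - j)) v))"
    by (rule mult_left_mono) (use le v in auto)
  then show "\<sigma> * ((t - v) powr (\<alpha> - 1) * g v)
          \<le> \<sigma> * (\<Sum>j\<le>n. c j * ((t - v) powr (\<alpha> - 1) * frac_monomial (\<alpha> * real (n - j)) v))"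
    by (simp add: sum_distrib_left algebra_simps)
qed

lemma frac_monomial_add_le:
  fixes \<alpha> \<sigma> x t :: real
  assumes a: "\<alpha> > 0" and x: "x > 0" and t: "t > 0"
    and kernel_mono: "\<And>s s'. 0 < s \<Longrightarrow> s < s' \<Longrightarrow> \<sigma> * s' powr (\<alpha> - 1) \<le> \<sigma> * s powr (\<alpha> - 1)"
  shows "\<sigma> * frac_monomial (\<alpha> * real n) (x + t)
           \<le> \<sigma> * (\<Sum>j\<le>n. frac_monomial (\<alpha> * real j) x * frac_monomial (\<alpha> * real (n - j)) t)"
  using t
proof (induction n arbitrary: t)
  case 0
  then show ?case using x by simp
next
  case (Suc n)
  define \<beta> where "\<beta> = \<alpha> * real n"
  define F where "F j = frac_monomial (\<alpha> * real j)" for j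
  have b: "\<beta> \<ge> 0" using a by (simp add: \<beta>_def)
  obtain I J where
    I: "((\<lambda>u. (x + t - u) powr (\<alpha> - 1) * frac_monomial \<beta> u) has_integral I) {0..x}" and
    J: "((\<lambda>v. (t - v) powr (\<alpha> - 1) * frac_monomial \<beta> (x + v)) has_integral J) {0..t}" and
    IJ: "I + J = Gamma \<alpha> * frac_monomial (\<alpha> + \<beta>) (x + t)"
    using frac_monomial_split_integral[OF a b x \<open>t > 0\<close>] .
  have head: "\<sigma> * I \<le> \<sigma> * (Gamma \<alpha> * F (Suc n) x)"
    using frac_monomial_head_integral_le[OF a b x \<open>t > 0\<close> kernel_mono I]
    by (simp add: F_def \<beta>_def algebra_simps)
  have tail: "\<sigma> * J \<le> \<sigma> * (\<Sum>j\<le>n. F j x * (Gamma \<alpha> * F (Suc n - j) t))"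
    unfolding F_def
    by (rule frac_monomial_tail_integral_le[OF a \<open>t > 0\<close> J]) (use Suc.IH in \<open>simp add: \<beta>_def\<close>)
  have "Gamma \<alpha> * (\<sigma> * F (Suc n) (x + t)) = \<sigma> * I + \<sigma> * J"
    unfolding distrib_left[symmetric] IJ by (simp add: F_def \<beta>_def algebra_simps)
  also have "\<dots> \<le> Gamma \<alpha> * (\<sigma> * (\<Sum>j\<le>Suc n. F j x * F (Suc n - j) t))"
    using head tail \<open>t > 0\<close> by (simp add: F_def sum_distrib_left algebra_simps)
  finally show ?case
    using Gamma_real_pos[OF a] by (simp add: F_def)
qed

lemma summable_mittag_leffler:
  fixes \<alpha> z :: real
  assumes a: "\<alpha> > 0" and z: "z \<ge> 0"
  shows "summable (\<lambda>k. z ^ k / Gamma (\<alpha> * real k + 1))"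
proof (rule summable_ratio_test[where c = "1/2"])
  \<comment> \<open>The ratio of consecutive terms is at most \<open>z / (\<alpha> k) powr \<alpha>\<close>, by \<open>powr_mult_Gamma_le\<close>.\<close>
  define N where "N = Suc (nat \<lceil>(2 * z + 1) powr (1 / \<alpha>) / \<alpha>\<rceil>)"
  fix k assume k: "k \<ge> N"
  define s where "s = \<alpha> * real k + 1"
  have "(2 * z + 1) powr (1 / \<alpha>) / \<alpha> \<le> real (nat \<lceil>(2 * z + 1) powr (1 / \<alpha>) / \<alpha>\<rceil>)"
    by (rule real_nat_ceiling_ge)
  also have "\<dots> \<le> real k"
    using k unfolding N_def by (metis Suc_leD of_nat_le_iff)
  finally have "(2 * z + 1) powr (1 / \<alpha>) \<le> \<alpha> * real k"
    using a by (simp add: field_simps)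
  then have "((2 * z + 1) powr (1 / \<alpha>)) powr \<alpha> \<le> (s - 1) powr \<alpha>"
    using a by (intro powr_mono2) (auto simp: s_def)
  then have large: "2 * z + 1 \<le> (s - 1) powr \<alpha>"
    using a z by (simp add: powr_powr)
  have s1: "s > 1"
    using a k by (simp add: s_def N_def)
  have pos: "Gamma s > 0" "Gamma (s + \<alpha>) > 0"
    using s1 a by (auto intro!: Gamma_real_pos)
  have "(2 * z + 1) * Gamma s \<le> Gamma (s + \<alpha>)"
    using mult_right_mono[OF large less_imp_le[OF pos(1)]] powr_mult_Gamma_le[OF s1 a] by linarith
  then have "z ^ Suc k / Gamma (s + \<alpha>) \<le> z * z ^ k / ((2 * z + 1) * Gamma s)"
    using z pos by (simp add: frac_le)
  also have "\<dots> = z / (2 * z + 1) * (z ^ k / Gamma s)"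
    by simp
  also have "\<dots> \<le> 1 / 2 * (z ^ k / Gamma s)"
    using z pos by (intro mult_right_mono) (auto simp: field_simps)
  finally show "norm (z ^ Suc k / Gamma (\<alpha> * real (Suc k) + 1))
                  \<le> 1 / 2 * norm (z ^ k / Gamma (\<alpha> * real k + 1))"
    using z pos by (simp add: s_def algebra_simps)
qed simp

lemma mittag_leffler_0 [simp]: "mittag_leffler \<alpha> 0 = 1"
proof -
  have "(\<lambda>k. 1 / Gamma (\<alpha> * real k + 1) * (0::real) ^ k) sums (1 / Gamma (\<alpha> * real 0 + 1))"
    by (rule powser_sums_zero)
  then show ?thesis
    unfolding mittag_leffler_def by (simp add: sums_iff)
qed

lemma sums_mittag_leffler_powr:
  fixes \<alpha> x :: real
  assumes "\<alpha> > 0" and "x > 0"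
  shows "(\<lambda>k. frac_monomial (\<alpha> * real k) x) sums mittag_leffler \<alpha> (x powr \<alpha>)"
proof -
  have "(x powr \<alpha>) ^ k / Gamma (\<alpha> * real k + 1) = frac_monomial (\<alpha> * real k) x" for k
    using \<open>x > 0\<close> by (simp add: frac_monomial_def powr_realpow[symmetric] powr_powr mult.commute)
  with summable_mittag_leffler[OF \<open>\<alpha> > 0\<close>, of "x powr \<alpha>"] show ?thesis
    unfolding mittag_leffler_def by (simp add: summable_sums)
qed

lemma mittag_leffler_add_powr_signed_less:
  fixes \<alpha> \<sigma> x y :: real
  assumes a: "\<alpha> > 0" and x: "x > 0" and y: "y > 0"
    and kernel_mono: "\<And>s s'. 0 < s \<Longrightarrow> s < s' \<Longrightarrow> \<sigma> * s' powr (\<alpha> - 1) \<le> \<sigma> * s powr (\<alpha> - 1)"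
    and strict: "\<sigma> * (x + y) powr \<alpha> < \<sigma> * (x powr \<alpha> + y powr \<alpha>)"
  shows "\<sigma> * mittag_leffler \<alpha> ((x + y) powr \<alpha>)
           < \<sigma> * (mittag_leffler \<alpha> (x powr \<alpha>) * mittag_leffler \<alpha> (y powr \<alpha>))"
proof -
  define F where "F j = frac_monomial (\<alpha> * real j)" for j
  define P where "P n = (\<Sum>j\<le>n. F j x * F (n - j) y)" for n
  have Fx: "(\<lambda>j. F j x) sums mittag_leffler \<alpha> (x powr \<alpha>)"
    and Fy: "(\<lambda>j. F j y) sums mittag_leffler \<alpha> (y powr \<alpha>)"
    and Fxy: "(\<lambda>j. F j (x + y)) sums mittag_leffler \<alpha> ((x + y) powr \<alpha>)"
    unfolding F_def using a x y by (auto intro: sums_mittag_leffler_powr)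
  have "norm (F j z) = F j z" for j z
    using a by (simp add: F_def frac_monomial_nonneg)
  then have "P sums (mittag_leffler \<alpha> (x powr \<alpha>) * mittag_leffler \<alpha> (y powr \<alpha>))"
    unfolding P_def using Cauchy_product_sums[of "\<lambda>j. F j x" "\<lambda>j. F j y"] Fx Fy
    by (simp add: sums_iff)
  then have product: "(\<lambda>n. \<sigma> * P n) sums (\<sigma> * (mittag_leffler \<alpha> (x powr \<alpha>) * mittag_leffler \<alpha> (y powr \<alpha>)))"
    by (rule sums_mult)
  have sum: "(\<lambda>n. \<sigma> * F n (x + y)) sums (\<sigma> * mittag_leffler \<alpha> ((x + y) powr \<alpha>))"
    using Fxy by (rule sums_mult)
  have termwise: "\<sigma> * F n (x + y) \<le> \<sigma> * P n" for n
    unfolding F_def P_def by (rule frac_monomial_add_le[OF a x y kernel_mono])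
  have "P 1 = (x powr \<alpha> + y powr \<alpha>) / Gamma (\<alpha> + 1)"
    using x y by (simp add: P_def F_def frac_monomial_def add_divide_distrib)
  moreover have "F 1 (x + y) = (x + y) powr \<alpha> / Gamma (\<alpha> + 1)"
    by (simp add: F_def frac_monomial_def)
  ultimately have "\<sigma> * F 1 (x + y) < \<sigma> * P 1"
    using divide_strict_right_mono[OF strict, of "Gamma (\<alpha> + 1)"] Gamma_real_pos[of "\<alpha> + 1"] a
    by simp
  then show ?thesis
    by (rule sums_less[OF termwise _ sum product])
qed

theorem theorem1p1:
  fixes \<alpha> x y :: real
  assumes "x \<ge> 0" and "y \<ge> 0"
  shows "(0 < \<alpha> \<and> \<alpha> < 1 \<longrightarrow>
            mittag_leffler \<alpha> ((x + y) powr \<alpha>)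
              \<le> mittag_leffler \<alpha> (x powr \<alpha>) * mittag_leffler \<alpha> (y powr \<alpha>))
       \<and> (\<alpha> > 1 \<longrightarrow>
            mittag_leffler \<alpha> ((x + y) powr \<alpha>)
              \<ge> mittag_leffler \<alpha> (x powr \<alpha>) * mittag_leffler \<alpha> (y powr \<alpha>))
       \<and> (0 < \<alpha> \<and> \<alpha> < 1 \<and> x > 0 \<and> y > 0 \<longrightarrow>
            mittag_leffler \<alpha> ((x + y) powr \<alpha>)
              < mittag_leffler \<alpha> (x powr \<alpha>) * mittag_leffler \<alpha> (y powr \<alpha>))
       \<and> (\<alpha> > 1 \<and> x > 0 \<and> y > 0 \<longrightarrow>
            mittag_leffler \<alpha> ((x + y) powr \<alpha>)
              > mittag_leffler \<alpha> (x powr \<alpha>) * mittag_leffler \<alpha> (y powr \<alpha>))"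
proof -
  have sub: "mittag_leffler \<alpha> ((x + y) powr \<alpha>) < mittag_leffler \<alpha> (x powr \<alpha>) * mittag_leffler \<alpha> (y powr \<alpha>)"
    if "0 < \<alpha>" "\<alpha> < 1" "x > 0" "y > 0"
  proof -
    have "1 * s' powr (\<alpha> - 1) \<le> 1 * s powr (\<alpha> - 1)" if "0 < s" "s < s'" for s s'
      using powr_mono2'[of "\<alpha> - 1" s s'] \<open>\<alpha> < 1\<close> that by simp
    with that show ?thesis
      using mittag_leffler_add_powr_signed_less[of \<alpha> x y 1] powr_add_less[of \<alpha> x y] by simp
  qed
  have super: "mittag_leffler \<alpha> ((x + y) powr \<alpha>) > mittag_leffler \<alpha> (x powr \<alpha>) * mittag_leffler \<alpha> (y powr \<alpha>)"
    if "\<alpha> > 1" "x > 0" "y > 0"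
  proof -
    have "- 1 * s' powr (\<alpha> - 1) \<le> - 1 * s powr (\<alpha> - 1)" if "0 < s" "s < s'" for s s'
      using powr_mono2[of "\<alpha> - 1" s s'] \<open>\<alpha> > 1\<close> that by simp
    with that show ?thesis
      using mittag_leffler_add_powr_signed_less[of \<alpha> x y "- 1"] powr_add_greater[of \<alpha> x y] by simp
  qed
  show ?thesis
  proof (cases "x = 0 \<or> y = 0")
    case True
    then show ?thesis by auto
  next
    case False
    with assms sub super show ?thesis
      by (auto intro: less_imp_le)
  qed
qed

end
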